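(* Let $f$ be a probability density on $\mathbb{R}_{\geq 0}$ and let $X,Y$ be independent random variables, each with distribution $f(x)\,dx$. Let $\operatorname{med}(X)$ denote a median of this distribution, i.e. a number $m> 0$ with $\mathbb{P}(X\le m)=1/2$. Then $$\sup_{0\le z\le \operatorname{med}(X)} \mathbb{P}\left( X \leq z \text{ and } X+Y \geq 2z\right) \;\geq\; \frac{1}{24 + 8\log_2\!\big( \operatorname{med}(X)\, \|f\|_{L^{\infty}}\big)},$$ and in particular the same lower bound holds for $\sup_{z>0} \mathbb{P}\left( X \leq z \text{ and } X+Y \geq 2z\right)$. Moreover, this estimate is sharp up to constants: there exist a constant $C>0$ and a sequence of probability densities $f_n$ on $\mathbb{R}_{\geq 0}$, with corresponding i.i.d. pairs $X_n,Y_n$, such that $\operatorname{med}(X_n)\|f_n\|_{L^\infty}\to\infty$ and $$\sup_{z>0} \mathbb{P}\left( X_n \leq z \text{ and } X_n+Y_n \geq 2z\right) \le \frac{C}{\log_2\!\big(\operatorname{med}(X_n)\|f_n\|_{L^\infty}\big)}\quad\text{for all } n.$$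
   Context: $\|f\|_{L^\infty}$ denotes the essential supremum of the density $f$; one always has $\operatorname{med}(X)\|f\|_{L^\infty}\ge 1/2$, so the right-hand side of the lower bound is well defined and positive (it is interpreted as $0$ if $\|f\|_{L^\infty}=\infty$). *)

theory Defs
  imports "HOL-Probability.Probability"
begin

definition prob_density_nonneg :: "(real \<Rightarrow> real) \<Rightarrow> bool" where
  "prob_density_nonneg f \<longleftrightarrow> f \<in> borel_measurable lborel \<and> (\<forall>x. 0 \<le> f x)
     \<and> (\<forall>x<0. f x = 0) \<and> (\<integral>\<^sup>+ x. ennreal (f x) \<partial>lborel) = 1"

definition Linf_norm :: "(real \<Rightarrow> real) \<Rightarrow> ereal" where
  "Linf_norm f = esssup lborel (\<lambda>x. ereal (f x))"

definition is_median :: "(real \<Rightarrow> real) \<Rightarrow> real \<Rightarrow> bool" where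
  "is_median f m \<longleftrightarrow> 0 < m \<and> measure (density lborel (\<lambda>x. ennreal (f x))) {..m} = 1/2"

definition iid_with_density :: "'a measure \<Rightarrow> ('a \<Rightarrow> real) \<Rightarrow> ('a \<Rightarrow> real) \<Rightarrow> (real \<Rightarrow> real) \<Rightarrow> bool" where
  "iid_with_density M X Y f \<longleftrightarrow> prob_space M
     \<and> distributed M lborel X (\<lambda>x. ennreal (f x))
     \<and> distributed M lborel Y (\<lambda>x. ennreal (f x))
     \<and> prob_space.indep_var M borel X borel Y"

definition PXY :: "'a measure \<Rightarrow> ('a \<Rightarrow> real) \<Rightarrow> ('a \<Rightarrow> real) \<Rightarrow> real \<Rightarrow> real" where
  "PXY M X Y z = measure M {\<omega> \<in> space M. X \<omega> \<le> z \<and> 2 * z \<le> X \<omega> + Y \<omega>}"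

definition lower_bound :: "real \<Rightarrow> (real \<Rightarrow> real) \<Rightarrow> real" where
  "lower_bound m f = (case Linf_norm f of ereal s \<Rightarrow> 1 / (24 + 8 * log 2 (m * s)) | _ \<Rightarrow> 0)"

end

theory Submission imports Defs begin

text \<open>
  Lower bound: let \<open>s = \<parallel>f\<parallel>\<^sub>\<infinity>\<close>. The dyadic points \<open>m - m/2\<^sup>i\<close> cut \<open>[0, m]\<close> into windows
  \<open>(m - 2d, m - d]\<close>. The last window of length about \<open>1/(4s)\<close> carries mass at most \<open>1/4\<close>, so the
  remaining \<open>K \<approx> log\<^sub>2(m s) + 2\<close> windows carry mass at least \<open>1/4\<close> and one of them carries at
  least \<open>1/(4K)\<close>. If \<open>X\<close> lies in that window and \<open>Y \<ge> m\<close>, which has probability \<open>1/2\<close>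
  independently, then \<open>X + Y \<ge> 2(m - d)\<close>.

  Sharpness: take the density \<open>1/((1 - x) ln 4\<^sup>j)\<close> on \<open>[0, 1 - 1/4\<^sup>j]\<close>. Then \<open>Y < 1\<close> almost surely,
  so the event forces \<open>X \<in> (2z - 1, z]\<close>, a window of mass at most \<open>ln 2 / ln 4\<^sup>j = 1/(2j)\<close>,
  while \<open>m \<parallel>f\<parallel>\<^sub>\<infinity>\<close> lies between \<open>j\<close> and \<open>4\<^sup>j\<close>.
\<close>

lemma prob_space_density_of_prob_density:
  assumes "prob_density_nonneg f"
  shows "prob_space (density lborel (\<lambda>x. ennreal (f x)))"
  using assms unfolding prob_density_nonneg_def
  by (intro prob_spaceI) (simp add: emeasure_density)

lemma Linf_norm_nonneg:
  assumes "prob_density_nonneg f"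
  shows "0 \<le> Linf_norm f"
proof (rule ccontr)
  assume "\<not> 0 \<le> Linf_norm f"
  moreover have "AE x in lborel. ereal (f x) \<le> Linf_norm f"
    unfolding Linf_norm_def by (rule esssup_AE)
  moreover have "0 \<le> ereal (f x)" for x
    using assms unfolding prob_density_nonneg_def by simp
  ultimately have "AE x in (lborel :: real measure). False"
    by (metis (mono_tags, lifting) eventually_mono order_trans)
  then show False by (auto simp: eventually_ae_filter top_unique)
qed

lemma emeasure_density_le_Linf_norm:
  assumes "f \<in> borel_measurable lborel" "Linf_norm f = ereal s" "A \<in> sets borel"
  shows "emeasure (density lborel (\<lambda>x. ennreal (f x))) A \<le> ennreal s * emeasure lborel A"
proof -
  have "AE x in lborel. f x \<le> s"
    using esssup_AE[of "\<lambda>x. ereal (f x)" lborel] assms(2) unfolding Linf_norm_def by simp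
  then have "(\<integral>\<^sup>+ x. ennreal (f x) * indicator A x \<partial>lborel) \<le> (\<integral>\<^sup>+ x. ennreal s * indicator A x \<partial>lborel)"
    by (intro nn_integral_mono_AE) (auto elim!: eventually_mono simp: indicator_def ennreal_leI)
  then show ?thesis
    using assms by (simp add: emeasure_density nn_integral_cmult_indicator)
qed

lemma measure_density_Ioc_le_Linf_norm:
  assumes "prob_density_nonneg f" "Linf_norm f = ereal s" "a \<le> b"
  shows "measure (density lborel (\<lambda>x. ennreal (f x))) {a<..b} \<le> s * (b - a)"
proof -
  have "0 \<le> s" using Linf_norm_nonneg[OF assms(1)] assms(2) by simp
  moreover have "emeasure (density lborel (\<lambda>x. ennreal (f x))) {a<..b} \<le> ennreal s * ennreal (b - a)"
    using emeasure_density_le_Linf_norm[of f s "{a<..b}"] assms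
    unfolding prob_density_nonneg_def by simp
  ultimately show ?thesis
    using assms(3) unfolding measure_def by (intro enn2real_leI) (simp_all add: ennreal_mult)
qed

lemma measure_density_atMost_zero:
  assumes "prob_density_nonneg f"
  shows "measure (density lborel (\<lambda>x. ennreal (f x))) {..0} = 0"
proof -
  have "AE x in lborel. ennreal (f x) * indicator {..0} x = 0"
    using AE_lborel_singleton[of 0]
    by eventually_elim (use assms in \<open>auto simp: indicator_def prob_density_nonneg_def\<close>)
  then have "(\<integral>\<^sup>+ x. ennreal (f x) * indicator {..0} x \<partial>lborel) = 0"
    by (subst nn_integral_cong_AE[where v = "\<lambda>_. 0"]) auto
  then have "emeasure (density lborel (\<lambda>x. ennreal (f x))) {..0} = 0"
    using assms unfolding prob_density_nonneg_def by (simp add: emeasure_density)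
  then show ?thesis by (simp add: measure_def)
qed

lemma measure_distributed_preimage:
  assumes "distributed M lborel X (\<lambda>x. ennreal (f x))" "A \<in> sets borel"
  shows "measure M {\<omega> \<in> space M. X \<omega> \<in> A} = measure (density lborel (\<lambda>x. ennreal (f x))) A"
proof -
  have "X \<in> measurable M lborel" "distr M lborel X = density lborel (\<lambda>x. ennreal (f x))"
    using assms(1) unfolding distributed_def by auto
  then show ?thesis
    using measure_distr[of X M lborel A] assms(2) by (simp add: Int_def conj_commute)
qed

lemma dyadic_window_increment_ge:
  fixes G :: "real \<Rightarrow> real"
  assumes "0 < m" and mass: "G m - G 0 = 1/2"
    and lipschitz: "\<And>a b. a \<le> b \<Longrightarrow> G b - G a \<le> s * (b - a)"
  shows "\<exists>d. 0 < d \<and> 2 * d \<le> m \<and> 1 / (12 + 4 * log 2 (m * s)) \<le> G (m - d) - G (m - 2 * d)"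
proof -
  define L where "L = log 2 (m * s)"
  have "1/2 \<le> m * s" using lipschitz[of 0 m] mass \<open>0 < m\<close> by (simp add: mult.commute)
  then have "2 powr L = m * s" "-1 \<le> L"
    unfolding L_def using le_log_iff[of 2 "m * s" "-1"] by (auto simp: powr_minus)
  define K where "K = nat \<lceil>L + 2\<rceil>"
  have K: "L + 2 \<le> K" "K \<le> L + 3" "0 < K"
    unfolding K_def using \<open>-1 \<le> L\<close> by linarith+
  have "4 * (m * s) \<le> 2 ^ K"
    using powr_mono[of "L + 2" K 2] K \<open>2 powr L = m * s\<close> by (simp add: powr_add powr_realpow)
  define z where "z i = m - m / 2 ^ i" for i :: nat
  have "G m - G (z K) \<le> s * (m / 2 ^ K)"
    using lipschitz[of "z K" m] \<open>0 < m\<close> unfolding z_def by simp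
  also have "\<dots> \<le> 1/4"
    using \<open>4 * (m * s) \<le> 2 ^ K\<close> by (simp add: field_simps)
  finally have "1/4 \<le> (\<Sum>i<K. G (z (Suc i)) - G (z i))"
    using mass sum_lessThan_telescope[of "\<lambda>i. G (z i)" K] by (simp add: z_def)
  then obtain i where "i < K" "1 / (4 * K) \<le> G (z (Suc i)) - G (z i)"
    using sum_bounded_above_strict[of "{..<K}" "\<lambda>i. G (z (Suc i)) - G (z i)" "1 / (4 * K)"] K
    by (force simp: not_le)
  moreover have "1 / (12 + 4 * L) \<le> 1 / (4 * K)"
    using K by (intro divide_left_mono) auto
  moreover define d where "d = m / 2 ^ Suc i"
  moreover have "z (Suc i) = m - d" "z i = m - 2 * d" "0 < d" "2 * d \<le> m"
    unfolding z_def d_def using \<open>0 < m\<close> by (simp_all add: field_simps)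
  ultimately show ?thesis
    unfolding L_def by (intro exI[of _ d]) auto
qed

lemma (in prob_space) indep_window_times_tail_le_PXY:
  assumes "indep_var borel X borel Y"
  shows "prob {\<omega> \<in> space M. X \<omega> \<in> {z - d<..z}} * prob {\<omega> \<in> space M. Y \<omega> \<in> {z + d..}} \<le> PXY M X Y z"
proof -
  have rv: "random_variable borel X" "random_variable borel Y"
    using indep_var_rv1[OF assms] indep_var_rv2[OF assms] by simp_all
  have "prob {\<omega> \<in> space M. X \<omega> \<in> {z - d<..z}} * prob {\<omega> \<in> space M. Y \<omega> \<in> {z + d..}}
      = prob {\<omega> \<in> space M. X \<omega> \<in> {z - d<..z} \<and> Y \<omega> \<in> {z + d..}}"
    by (rule prob_indep_random_variable[OF assms, symmetric]) auto
  also have "\<dots> \<le> PXY M X Y z"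
    unfolding PXY_def using rv by (intro finite_measure_mono) auto
  finally show ?thesis .
qed

lemma (in prob_space) PXY_le_window_plus_tail:
  assumes "random_variable borel X" "random_variable borel Y"
  shows "PXY M X Y z \<le> prob {\<omega> \<in> space M. X \<omega> \<in> {2 * z - b<..z}} + prob {\<omega> \<in> space M. Y \<omega> \<in> {b..}}"
proof -
  have "PXY M X Y z \<le> prob ({\<omega> \<in> space M. X \<omega> \<in> {2 * z - b<..z}} \<union> {\<omega> \<in> space M. Y \<omega> \<in> {b..}})"
    unfolding PXY_def using assms by (intro finite_measure_mono) auto
  also have "\<dots> \<le> prob {\<omega> \<in> space M. X \<omega> \<in> {2 * z - b<..z}} + prob {\<omega> \<in> space M. Y \<omega> \<in> {b..}}"
    using assms by (intro measure_Un_le) auto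
  finally show ?thesis .
qed

lemma exists_PXY_ge_lower_bound:
  assumes pd: "prob_density_nonneg f" and iid: "iid_with_density M X Y f" and med: "is_median f m"
  shows "\<exists>z\<in>{0<..m}. lower_bound m f \<le> PXY M X Y z"
proof (cases "Linf_norm f")
  case (real s)
  interpret prob_space M
    using iid unfolding iid_with_density_def by blast
  have X: "distributed M lborel X (\<lambda>x. ennreal (f x))" and Y: "distributed M lborel Y (\<lambda>x. ennreal (f x))"
    and indep: "indep_var borel X borel Y"
    using iid unfolding iid_with_density_def by auto
  define D where "D = density lborel (\<lambda>x. ennreal (f x))"
  interpret D: prob_space D
    unfolding D_def by (rule prob_space_density_of_prob_density[OF pd])
  have sets_D: "sets D = sets borel" unfolding D_def by simp
  define G where "G t = measure D {..t}" for t
  have G_diff: "measure D {a<..b} = G b - G a" if "a \<le> b" for a b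
  proof -
    have "{a<..b} = {..b} - {..a}" by auto
    then show ?thesis
      unfolding G_def using that by (simp add: D.finite_measure_Diff sets_D)
  qed
  have "0 < m" "G m - G 0 = 1/2"
    using med measure_density_atMost_zero[OF pd] unfolding is_median_def G_def D_def by auto
  moreover have "G b - G a \<le> s * (b - a)" if "a \<le> b" for a b
    using measure_density_Ioc_le_Linf_norm[OF pd real that] G_diff[OF that] by (simp add: D_def)
  ultimately obtain d where d: "0 < d" "2 * d \<le> m"
    and window: "1 / (12 + 4 * log 2 (m * s)) \<le> G (m - d) - G (m - 2 * d)"
    using dyadic_window_increment_ge[of m G s] by blast
  have X_window: "prob {\<omega> \<in> space M. X \<omega> \<in> {m - 2 * d<..m - d}} = G (m - d) - G (m - 2 * d)"
    using measure_distributed_preimage[OF X, of "{m - 2 * d<..m - d}"] G_diff[of "m - 2 * d" "m - d"] d by (simp add: D_def)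
  have Y_tail: "1/2 \<le> prob {\<omega> \<in> space M. Y \<omega> \<in> {m..}}"
  proof -
    have "measure D (space D - {..m}) \<le> measure D {m..}"
      by (intro D.finite_measure_mono) (auto simp: sets_D)
    then show ?thesis
      using D.prob_compl[of "{..m}"] med measure_distributed_preimage[OF Y, of "{m..}"]
      unfolding is_median_def by (simp add: D_def)
  qed
  have "1 / (12 + 4 * log 2 (m * s)) * (1/2) \<le> (G (m - d) - G (m - 2 * d)) * prob {\<omega> \<in> space M. Y \<omega> \<in> {m..}}"
    by (intro mult_mono[OF window Y_tail]) (simp_all add: X_window[symmetric])
  also have "\<dots> \<le> PXY M X Y (m - d)"
    using indep_window_times_tail_le_PXY[OF indep, of "m - d" d] X_window by simp
  finally have "1 / (24 + 8 * log 2 (m * s)) \<le> PXY M X Y (m - d)"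
    by simp
  then show ?thesis
    using d unfolding lower_bound_def real by (intro bexI[of _ "m - d"]) auto
qed (use med in \<open>auto simp: lower_bound_def is_median_def PXY_def\<close>)

lemma nn_integral_inverse_one_minus:
  fixes a b c :: real
  assumes "a \<le> b" "b < 1" "0 < c"
  shows "(\<integral>\<^sup>+ x. ennreal (1 / ((1 - x) * c)) * indicator {a..b} x \<partial>lborel) = ennreal ((ln (1 - a) - ln (1 - b)) / c)"
proof -
  have "((\<lambda>x. - ln (1 - x) / c) has_real_derivative 1 / ((1 - x) * c)) (at x within {a..b})"
    if "x \<in> {a..b}" for x
    using that assms by (auto intro!: derivative_eq_intros simp: field_simps)
  then have "((\<lambda>x. 1 / ((1 - x) * c)) has_integral (- ln (1 - b) / c - - ln (1 - a) / c)) {a..b}"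
    using assms(1) by (intro fundamental_theorem_of_calculus) (auto simp: has_real_derivative_iff_has_vector_derivative)
  then show ?thesis
    using assms by (intro nn_integral_has_integral_lebesgue') (auto simp: diff_divide_distrib)
qed

definition sharp_density :: "nat \<Rightarrow> real \<Rightarrow> real" where
  "sharp_density j x = (if 0 \<le> x \<and> x \<le> 1 - 1 / 4 ^ j then 1 / ((1 - x) * (2 * real j * ln 2)) else 0)"

lemma sharp_density_borel_measurable [measurable]: "sharp_density j \<in> borel_measurable lborel"
  unfolding sharp_density_def by measurable

lemma less_one_if_le_one_minus_inverse_four_power: "x \<le> 1 - 1 / 4 ^ j \<Longrightarrow> x < (1 :: real)"
  by (smt (verit) zero_less_divide_1_iff zero_less_power)

lemma sharp_density_nonneg: "0 \<le> sharp_density j x"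
  unfolding sharp_density_def
  by (auto dest: less_one_if_le_one_minus_inverse_four_power intro!: mult_nonneg_nonneg)

lemma ln_four_power: "ln ((4 :: real) ^ j) = 2 * real j * ln 2"
  using ln_realpow[of 2 2] by (simp add: ln_realpow)

lemma nn_integral_sharp_density_Icc:
  assumes "1 \<le> j" "0 \<le> a" "a \<le> b" "b \<le> 1 - 1 / 4 ^ j"
  shows "(\<integral>\<^sup>+ x. ennreal (sharp_density j x) * indicator {a..b} x \<partial>lborel)
    = ennreal ((ln (1 - a) - ln (1 - b)) / (2 * real j * ln 2))"
proof -
  have "b < 1"
    using assms(4) by (rule less_one_if_le_one_minus_inverse_four_power)
  have "(\<integral>\<^sup>+ x. ennreal (sharp_density j x) * indicator {a..b} x \<partial>lborel)
      = (\<integral>\<^sup>+ x. ennreal (1 / ((1 - x) * (2 * real j * ln 2))) * indicator {a..b} x \<partial>lborel)"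
    using assms by (intro nn_integral_cong) (auto simp: sharp_density_def indicator_def)
  also have "\<dots> = ennreal ((ln (1 - a) - ln (1 - b)) / (2 * real j * ln 2))"
    using assms \<open>b < 1\<close> by (intro nn_integral_inverse_one_minus) auto
  finally show ?thesis .
qed

lemma emeasure_sharp_density_le:
  assumes "1 \<le> j" "a \<le> b" "b < 1"
  shows "emeasure (density lborel (\<lambda>x. ennreal (sharp_density j x))) {a..b}
    \<le> ennreal ((ln (1 - a) - ln (1 - b)) / (2 * real j * ln 2))"
proof -
  have "sharp_density j x \<le> 1 / ((1 - x) * (2 * real j * ln 2))" if "x \<le> b" for x
    using that assms by (auto simp: sharp_density_def)
  then have "(\<integral>\<^sup>+ x. ennreal (sharp_density j x) * indicator {a..b} x \<partial>lborel)
      \<le> (\<integral>\<^sup>+ x. ennreal (1 / ((1 - x) * (2 * real j * ln 2))) * indicator {a..b} x \<partial>lborel)"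
    by (intro nn_integral_mono) (auto simp: indicator_def ennreal_leI)
  also have "\<dots> = ennreal ((ln (1 - a) - ln (1 - b)) / (2 * real j * ln 2))"
    using assms by (intro nn_integral_inverse_one_minus) auto
  finally show ?thesis by (simp add: emeasure_density)
qed

lemma emeasure_sharp_density_atLeast_one:
  "emeasure (density lborel (\<lambda>x. ennreal (sharp_density j x))) {1..} = 0"
proof -
  have "(\<integral>\<^sup>+ x. ennreal (sharp_density j x) * indicator {1..} x \<partial>lborel)
      = (\<integral>\<^sup>+ x. 0 \<partial>(lborel :: real measure))"
    by (intro nn_integral_cong)
      (auto simp: sharp_density_def indicator_def dest: less_one_if_le_one_minus_inverse_four_power)
  then show ?thesis by (simp add: emeasure_density)
qed

lemma prob_density_sharp_density:
  assumes "1 \<le> j"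
  shows "prob_density_nonneg (sharp_density j)"
proof -
  have "(\<integral>\<^sup>+ x. ennreal (sharp_density j x) \<partial>lborel)
      = (\<integral>\<^sup>+ x. ennreal (sharp_density j x) * indicator {0..1 - 1 / 4 ^ j} x \<partial>lborel)"
    by (intro nn_integral_cong) (auto simp: sharp_density_def indicator_def)
  also have "\<dots> = ennreal ((ln 1 - ln (1 / 4 ^ j)) / (2 * real j * ln 2))"
    using assms by (subst nn_integral_sharp_density_Icc) auto
  also have "\<dots> = 1"
    using assms by (simp add: ln_div ln_four_power)
  finally show ?thesis
    unfolding prob_density_nonneg_def using sharp_density_nonneg by (auto simp: sharp_density_def)
qed

lemma is_median_sharp_density:
  assumes "1 \<le> j"
  shows "is_median (sharp_density j) (1 - 1 / 2 ^ j)"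
proof -
  have "(1 :: real) / 4 ^ j \<le> 1 / 2 ^ j" "(1 :: real) / 2 ^ j < 1"
    using assms by (auto intro!: divide_left_mono power_mono)
  have "emeasure (density lborel (\<lambda>x. ennreal (sharp_density j x))) {..1 - 1 / 2 ^ j}
      = (\<integral>\<^sup>+ x. ennreal (sharp_density j x) * indicator {..1 - 1 / 2 ^ j} x \<partial>lborel)"
    by (simp add: emeasure_density)
  also have "\<dots> = (\<integral>\<^sup>+ x. ennreal (sharp_density j x) * indicator {0..1 - 1 / 2 ^ j} x \<partial>lborel)"
    by (intro nn_integral_cong) (auto simp: sharp_density_def indicator_def)
  also have "\<dots> = ennreal ((ln 1 - ln (1 / 2 ^ j)) / (2 * real j * ln 2))"
    using assms \<open>1 / 4 ^ j \<le> 1 / 2 ^ j\<close> \<open>1 / 2 ^ j < 1\<close>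
    by (subst nn_integral_sharp_density_Icc) auto
  also have "\<dots> = ennreal (1/2)"
    using assms by (simp add: ln_div ln_realpow)
  finally have mass: "emeasure (density lborel (\<lambda>x. ennreal (sharp_density j x))) {..1 - 1 / 2 ^ j} = ennreal (1/2)" .
  have "measure (density lborel (\<lambda>x. ennreal (sharp_density j x))) {..1 - 1 / 2 ^ j} = 1/2"
    unfolding measure_def mass by (rule enn2real_ennreal) simp
  then show ?thesis
    unfolding is_median_def using \<open>1 / 2 ^ j < 1\<close> by simp
qed

lemma sharp_density_le:
  assumes "1 \<le> j"
  shows "sharp_density j x \<le> 4 ^ j / (2 * real j * ln 2)"
proof (cases "0 \<le> x \<and> x \<le> 1 - 1 / 4 ^ j")
  case True
  then have "1 / 4 ^ j \<le> 1 - x" "0 < 1 - x"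
    using less_one_if_le_one_minus_inverse_four_power[of x j] by auto
  then have "1 / ((1 - x) * (2 * real j * ln 2)) \<le> 1 / (1 / 4 ^ j * (2 * real j * ln 2))"
    using assms by (intro divide_left_mono mult_right_mono) (auto intro!: mult_pos_pos)
  then show ?thesis
    using True by (simp add: sharp_density_def)
qed (use assms in \<open>auto simp: sharp_density_def\<close>)

lemma Linf_norm_sharp_density:
  assumes "1 \<le> j"
  shows "\<exists>s. Linf_norm (sharp_density j) = ereal s \<and> 4 ^ j / (2 * real j) \<le> s \<and> s \<le> 4 ^ j / (2 * real j * ln 2)"
proof -
  have "Linf_norm (sharp_density j) \<le> ereal (4 ^ j / (2 * real j * ln 2))"
    unfolding Linf_norm_def using sharp_density_le[OF assms] by (intro esssup_I) auto
  moreover have "0 \<le> Linf_norm (sharp_density j)"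
    using Linf_norm_nonneg[OF prob_density_sharp_density[OF assms]] .
  ultimately obtain s where s: "Linf_norm (sharp_density j) = ereal s" "s \<le> 4 ^ j / (2 * real j * ln 2)"
    by (cases "Linf_norm (sharp_density j)") auto
  have "0 \<le> s"
    using Linf_norm_nonneg[OF prob_density_sharp_density[OF assms]] s(1) by simp
  have gap: "(2 :: real) / 4 ^ j \<le> 2 / 4" "(1 :: real) / 4 ^ j \<le> 2 / 4 ^ j"
    using assms by (auto intro!: divide_left_mono divide_right_mono simp: power_increasing[of 1 j "4::real", simplified])
  then have "ennreal (1 / (2 * real j))
      = (\<integral>\<^sup>+ x. ennreal (sharp_density j x) * indicator {1 - 2 / 4 ^ j..1 - 1 / 4 ^ j} x \<partial>lborel)"
    using assms by (subst nn_integral_sharp_density_Icc) (auto simp: ln_div)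
  also have "\<dots> \<le> ennreal s * emeasure lborel {1 - 2 / 4 ^ j..1 - 1 / (4 :: real) ^ j}"
    using emeasure_density_le_Linf_norm[OF sharp_density_borel_measurable s(1), of "{1 - 2 / 4 ^ j..1 - 1 / 4 ^ j}"]
    by (simp add: emeasure_density)
  also have "\<dots> = ennreal (s / 4 ^ j)"
    using \<open>0 \<le> s\<close> gap(2) by (simp add: ennreal_mult[symmetric])
  finally have "1 / (2 * real j) \<le> s / 4 ^ j"
    using \<open>0 \<le> s\<close> by simp
  then have "4 ^ j / (2 * real j) \<le> s"
    by (simp add: field_simps)
  then show ?thesis
    using s by blast
qed

lemma emeasure_sharp_density_window_le:
  assumes "1 \<le> j"
  shows "emeasure (density lborel (\<lambda>x. ennreal (sharp_density j x))) {2 * z - 1<..z} \<le> ennreal (1 / (2 * real j))"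
proof (cases "z < 1")
  case True
  have "emeasure (density lborel (\<lambda>x. ennreal (sharp_density j x))) {2 * z - 1<..z}
      \<le> emeasure (density lborel (\<lambda>x. ennreal (sharp_density j x))) {2 * z - 1..z}"
    by (intro emeasure_mono) auto
  also have "\<dots> \<le> ennreal ((ln (1 - (2 * z - 1)) - ln (1 - z)) / (2 * real j * ln 2))"
    using assms True by (intro emeasure_sharp_density_le) auto
  also have "ln (1 - (2 * z - 1)) = ln 2 + ln (1 - z)"
    using True ln_mult_pos[of 2 "1 - z"] by (simp add: algebra_simps)
  finally show ?thesis
    by simp
qed simp

lemma PXY_sharp_density_le:
  assumes "1 \<le> j" "iid_with_density M X Y (sharp_density j)"
  shows "PXY M X Y z \<le> 1 / (2 * real j)"
proof -
  interpret prob_space M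
    using assms(2) unfolding iid_with_density_def by blast
  have X: "distributed M lborel X (\<lambda>x. ennreal (sharp_density j x))"
    and Y: "distributed M lborel Y (\<lambda>x. ennreal (sharp_density j x))"
    using assms(2) unfolding iid_with_density_def by auto
  have "prob {\<omega> \<in> space M. X \<omega> \<in> {2 * z - 1<..z}} \<le> 1 / (2 * real j)"
    using measure_distributed_preimage[OF X, of "{2 * z - 1<..z}"] emeasure_sharp_density_window_le[OF assms(1)]
    unfolding measure_def by (simp add: enn2real_leI)
  moreover have "prob {\<omega> \<in> space M. Y \<omega> \<in> {1..}} = 0"
    using measure_distributed_preimage[OF Y, of "{1..}"] emeasure_sharp_density_atLeast_one
    unfolding measure_def by simp
  moreover have "random_variable borel X" "random_variable borel Y"
    using X Y unfolding distributed_def by auto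
  ultimately show ?thesis
    using PXY_le_window_plus_tail[of X Y z 1] by simp
qed

lemma four_power_ge: "4 * real j ^ 2 \<le> 4 ^ j"
proof (cases j)
  case (Suc i)
  have "Suc i \<le> 2 ^ i"
    by (rule Suc_leI[OF less_exp])
  then have "real (Suc i) \<le> 2 ^ i"
    by (metis of_nat_le_iff of_nat_numeral of_nat_power)
  then have "2 * real j \<le> 2 ^ j"
    using Suc by simp
  then have "(2 * real j) * (2 * real j) \<le> 2 ^ j * 2 ^ j"
    by (intro mult_mono) auto
  then show ?thesis
    by (simp add: power2_eq_square power_mult_distrib[symmetric])
qed simp

lemma sharp_density_median_times_Linf_norm:
  assumes "1 \<le> j"
  shows "real j \<le> (1 - 1 / 2 ^ j) * real_of_ereal (Linf_norm (sharp_density j))"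
    and "(1 - 1 / 2 ^ j) * real_of_ereal (Linf_norm (sharp_density j)) \<le> 4 ^ j"
proof -
  obtain s where s: "Linf_norm (sharp_density j) = ereal s" "4 ^ j / (2 * real j) \<le> s" "s \<le> 4 ^ j / (2 * real j * ln 2)"
    using Linf_norm_sharp_density[OF assms] by blast
  have m: "1/2 \<le> 1 - (1 :: real) / 2 ^ j" "1 - (1 :: real) / 2 ^ j \<le> 1"
    using assms power_increasing[of 1 j "2 :: real"] by (auto simp: field_simps)
  have "real j \<le> 1/2 * (4 ^ j / (2 * real j))"
    using four_power_ge[of j] assms by (simp add: field_simps power2_eq_square)
  also have "\<dots> \<le> (1 - 1 / 2 ^ j) * s"
    using m s(2) assms by (intro mult_mono) auto
  finally show "real j \<le> (1 - 1 / 2 ^ j) * real_of_ereal (Linf_norm (sharp_density j))"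
    using s(1) by simp
  have "1 * 1 \<le> real j * (2 * ln 2)"
    using assms ln2_ge_two_thirds by (intro mult_mono) auto
  then have "4 ^ j / (2 * real j * ln 2) \<le> 4 ^ j / 1"
    by (intro divide_left_mono) (auto simp: algebra_simps)
  then have "s \<le> 4 ^ j"
    using s(3) by simp
  moreover have "0 \<le> s"
    using order_trans[OF _ s(2), of 0] by simp
  moreover have "(1 - 1 / 2 ^ j) * s \<le> s"
    using m \<open>0 \<le> s\<close> by (intro mult_left_le_one_le) auto
  ultimately show "(1 - 1 / 2 ^ j) * real_of_ereal (Linf_norm (sharp_density j)) \<le> 4 ^ j"
    using s(1) by simp
qed

lemma SUP_PXY_sharp_density_le:
  assumes "2 \<le> j" "iid_with_density M X Y (sharp_density j)"
  shows "(SUP z\<in>{0<..}. PXY M X Y z) \<le> 1 / log 2 ((1 - 1 / 2 ^ j) * real_of_ereal (Linf_norm (sharp_density j)))"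
proof -
  define t where "t = (1 - 1 / 2 ^ j) * real_of_ereal (Linf_norm (sharp_density j))"
  have "1 < t" "t \<le> 2 powr (2 * real j)"
    using sharp_density_median_times_Linf_norm[of j] assms(1)
    by (auto simp: t_def powr_realpow power_mult simp flip: powr_powr)
  then have "0 < log 2 t" "log 2 t \<le> 2 * real j"
    by (auto simp: log_le_iff)
  have "(SUP z\<in>{0<..}. PXY M X Y z) \<le> 1 / (2 * real j)"
    using PXY_sharp_density_le[of j M X Y] assms by (intro cSUP_least) auto
  also have "\<dots> \<le> 1 / log 2 t"
    using \<open>0 < log 2 t\<close> \<open>log 2 t \<le> 2 * real j\<close> by (intro divide_left_mono) auto
  finally show ?thesis
    unfolding t_def .
qed

theorem mainTheorem1:
  shows
  "(\<forall>(f::real \<Rightarrow> real) m (M::'a measure) X Y.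
      prob_density_nonneg f \<longrightarrow> iid_with_density M X Y f \<longrightarrow> is_median f m \<longrightarrow>
        (SUP z\<in>{0..m}. PXY M X Y z) \<ge> lower_bound m f
      \<and> (SUP z\<in>{0<..}. PXY M X Y z) \<ge> lower_bound m f)
   \<and> (\<exists>(C::real) (fs::nat \<Rightarrow> real \<Rightarrow> real) (ms::nat \<Rightarrow> real). C > 0
      \<and> (\<forall>n. prob_density_nonneg (fs n) \<and> is_median (fs n) (ms n)
              \<and> Linf_norm (fs n) \<noteq> \<infinity>)
      \<and> filterlim (\<lambda>n. ms n * real_of_ereal (Linf_norm (fs n))) at_top sequentially
      \<and> (\<forall>n (M::'a measure) X Y. iid_with_density M X Y (fs n) \<longrightarrow>
            (SUP z\<in>{0<..}. PXY M X Y z)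
              \<le> C / log 2 (ms n * real_of_ereal (Linf_norm (fs n)))))"
proof (intro conjI allI impI)
  fix f :: "real \<Rightarrow> real" and m and M :: "'a measure" and X Y
  assume "prob_density_nonneg f" and iid: "iid_with_density M X Y f" and "is_median f m"
  then obtain z where z: "z \<in> {0<..m}" "lower_bound m f \<le> PXY M X Y z"
    using exists_PXY_ge_lower_bound by blast
  interpret prob_space M
    using iid unfolding iid_with_density_def by blast
  have bdd: "bdd_above (PXY M X Y ` A)" for A
    by (intro bdd_aboveI[of _ 1]) (auto simp: PXY_def)
  show "lower_bound m f \<le> (SUP z\<in>{0..m}. PXY M X Y z)" "lower_bound m f \<le> (SUP z\<in>{0<..}. PXY M X Y z)"
    using z by (auto intro!: cSUP_upper2[OF bdd, of z])
next
  define median_seq where "median_seq n = 1 - 1 / (2 :: real) ^ (n + 2)" for n :: nat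
  have "filterlim (\<lambda>n. median_seq n * real_of_ereal (Linf_norm (sharp_density (n + 2)))) at_top sequentially"
  proof (rule filterlim_at_top_mono[OF filterlim_real_sequentially always_eventually], intro allI)
    fix n
    show "real n \<le> median_seq n * real_of_ereal (Linf_norm (sharp_density (n + 2)))"
      using sharp_density_median_times_Linf_norm(1)[of "n + 2"] unfolding median_seq_def by simp
  qed
  moreover have "prob_density_nonneg (sharp_density (n + 2)) \<and> is_median (sharp_density (n + 2)) (median_seq n)
      \<and> Linf_norm (sharp_density (n + 2)) \<noteq> \<infinity>" for n
    using prob_density_sharp_density[of "n + 2"] is_median_sharp_density[of "n + 2"]
      Linf_norm_sharp_density[of "n + 2"] unfolding median_seq_def by auto
  moreover have "(SUP z\<in>{0<..}. PXY M X Y z) \<le> 1 / log 2 (median_seq n * real_of_ereal (Linf_norm (sharp_density (n + 2))))"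
    if "iid_with_density M X Y (sharp_density (n + 2))" for n and M :: "'a measure" and X Y
    using SUP_PXY_sharp_density_le[OF _ that] unfolding median_seq_def by simp
  ultimately show "\<exists>(C::real) (fs::nat \<Rightarrow> real \<Rightarrow> real) (ms::nat \<Rightarrow> real). C > 0
      \<and> (\<forall>n. prob_density_nonneg (fs n) \<and> is_median (fs n) (ms n) \<and> Linf_norm (fs n) \<noteq> \<infinity>)
      \<and> filterlim (\<lambda>n. ms n * real_of_ereal (Linf_norm (fs n))) at_top sequentially
      \<and> (\<forall>n (M::'a measure) X Y. iid_with_density M X Y (fs n) \<longrightarrow>
            (SUP z\<in>{0<..}. PXY M X Y z) \<le> C / log 2 (ms n * real_of_ereal (Linf_norm (fs n))))"
    by (intro exI[of _ 1] exI[of _ "\<lambda>n. sharp_density (n + 2)"] exI[of _ median_seq])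
      auto
qed

end
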